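(* For every $n\ge1$, $\mathrm{Extr}(\mathcal A^n_\oplus)\setminus\mathcal A^{n-1}_\oplus\subseteq\mathrm{Extr}(\mathcal A^n_+)$.
   Context: Let $\mathcal H=L^2(\mathbb R)$ with Fock basis $\{|k\rangle\}$, annihilation operator $\hat a$, $\hat n=\hat a^\dagger\hat a$, $\hat D(\alpha)=\exp(\alpha\hat a^\dagger-\alpha^*\hat a)$, $\hat\Pi(\alpha)=\hat D(\alpha)(-1)^{\hat n}\hat D(\alpha)^\dagger$, and Wigner function $W_{\hat A}(\alpha)=\frac2\pi\mathrm{Tr}[\hat A\hat\Pi(\alpha)]$. A quasi-state is a Hermitian trace-class operator of unit trace. With $\hat P_n=\sum_{k=0}^n|k\rangle\langle k|$, $\mathcal A^n_+$ is the set of quasi-states $\hat A$ with $\hat P_n\hat A\hat P_n=\hat A$ and $W_{\hat A}(\alpha)\ge0$ for all $\alpha\in\mathbb C$; $\mathcal A^n_\oplus$ is the subset of $\mathcal A^n_+$ consisting of phase-invariant operators, i.e. those diagonal in the Fock basis. $\mathrm{Extr}(\mathcal C)$ is the set of extreme points of a convex set $\mathcal C$ ($a$ such that $a=\frac12(x+y)$, $x,y\in\mathcal C$, forces $x=y=a$). *)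

theory Defs
  imports Complex_Main
begin

(* Operators supported on span{|0>,...,|n>} are represented by their Fock-basis
   matrix elements A j k = <j|A|k>, as functions nat => nat => complex. *)

(* Fock matrix element <m| D(beta) |k> of the displacement operator
   D(beta) = exp(beta a^dag - cnj beta a), written out via the normal-ordered form
   D(beta) = exp(-|beta|^2/2) exp(beta a^dag) exp(-cnj beta a). *)
definition disp_elem :: "complex \<Rightarrow> nat \<Rightarrow> nat \<Rightarrow> complex" where
  "disp_elem \<beta> m k =
     complex_of_real (exp (- (cmod \<beta>)\<^sup>2 / 2)) *
     (\<Sum>l\<le>min m k. \<beta> ^ (m - l) * (- cnj \<beta>) ^ (k - l) *
        complex_of_real (sqrt (fact m * fact k) / (fact l * fact (m - l) * fact (k - l))))"

(* <m| Pi(alpha) |k> with Pi(alpha) = D(alpha) (-1)^n D(alpha)^dag,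
   inserting the Fock resolution of identity. *)
definition parity_elem :: "complex \<Rightarrow> nat \<Rightarrow> nat \<Rightarrow> complex" where
  "parity_elem \<alpha> m k = (\<Sum>l. disp_elem \<alpha> m l * (-1) ^ l * cnj (disp_elem \<alpha> k l))"

(* Wigner function W_A(alpha) = 2/pi Tr[A Pi(alpha)] of an operator supported on
   span{|0>,...,|n>} (real for Hermitian A; we take the real part). *)
definition wigner :: "nat \<Rightarrow> (nat \<Rightarrow> nat \<Rightarrow> complex) \<Rightarrow> complex \<Rightarrow> real" where
  "wigner n A \<alpha> = 2 / pi * Re (\<Sum>j\<le>n. \<Sum>k\<le>n. A j k * parity_elem \<alpha> k j)"

definition supported_on :: "nat \<Rightarrow> (nat \<Rightarrow> nat \<Rightarrow> complex) \<Rightarrow> bool" where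
  "supported_on n A \<longleftrightarrow> (\<forall>j k. (n < j \<or> n < k) \<longrightarrow> A j k = 0)"

definition quasi_state_on :: "nat \<Rightarrow> (nat \<Rightarrow> nat \<Rightarrow> complex) \<Rightarrow> bool" where
  "quasi_state_on n A \<longleftrightarrow> supported_on n A \<and> (\<forall>j k. A j k = cnj (A k j))
      \<and> (\<Sum>k\<le>n. A k k) = 1"

definition Aplus :: "nat \<Rightarrow> (nat \<Rightarrow> nat \<Rightarrow> complex) set" where
  "Aplus n = {A. quasi_state_on n A \<and> (\<forall>\<alpha>. 0 \<le> wigner n A \<alpha>)}"

definition Aoplus :: "nat \<Rightarrow> (nat \<Rightarrow> nat \<Rightarrow> complex) set" where
  "Aoplus n = {A \<in> Aplus n. \<forall>j k. j \<noteq> k \<longrightarrow> A j k = 0}"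

definition extr :: "(nat \<Rightarrow> nat \<Rightarrow> complex) set \<Rightarrow> (nat \<Rightarrow> nat \<Rightarrow> complex) set" where
  "extr C = {a \<in> C. \<forall>x\<in>C. \<forall>y\<in>C. a = (\<lambda>j k. (x j k + y j k) / 2) \<longrightarrow> x = a \<and> y = a}"

end

theory Submission
  imports Defs "HOL-Computational_Algebra.Polynomial"
begin

text \<open>
  Let \<open>A\<close> be extreme among the phase-invariant quasi-states supported on
  \<open>|0\<rangle>, \<dots>, |n\<rangle>\<close> with \<open>A n n \<noteq> 0\<close>, and let \<open>A = (X + Y) / 2\<close> with \<open>X\<close>, \<open>Y\<close>
  Wigner-positive. Averaging a Wigner function over the rotations \<open>\<alpha> \<mapsto> \<omega> \<alpha>\<close>, \<open>\<omega>\<close> a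
  \<open>(2n + 1)\<close>-th root of unity, projects the operator onto its diagonal; so the diagonal parts
  of \<open>X\<close> and \<open>Y\<close> are phase-invariant, and extremality makes them equal to \<open>A\<close>. The
  difference \<open>D = X - A\<close> then satisfies \<open>|W\<^sub>D| \<le> W\<^sub>A\<close>, where
  \<open>W\<^sub>A(\<alpha>) = 2/\<pi> exp (-2|\<alpha>|\<^sup>2) p(|\<alpha>|\<^sup>2)\<close> for a polynomial \<open>p\<close> of degree \<open>n\<close>.
  Weighting the average by \<open>\<omega>\<^sup>-\<^sup>m\<close> isolates the \<open>m\<close>-th off-diagonal of \<open>D\<close>; if it is
  nonzero, \<open>(2r)\<^sup>m |u(r\<^sup>2)| \<le> p(r\<^sup>2)\<close> for a nonzero polynomial \<open>u\<close> of degree at most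
  \<open>n - m\<close>. Then \<open>x\<^sup>h u\<close> with \<open>h = \<lceil>m / 2\<rceil>\<close> has degree at most \<open>n\<close>, is not a multiple
  of \<open>p\<close>, and is bounded by a multiple of \<open>p\<close> on \<open>[0, \<infinity>)\<close>. Moving \<open>A\<close> in the
  corresponding trace-free diagonal direction therefore stays phase-invariant and
  Wigner-positive for both signs, contradicting extremality. Hence \<open>X = A\<close>.
\<close>

section \<open>Fock matrix elements of displacement and parity\<close>

definition disp_kernel :: "complex \<Rightarrow> nat \<Rightarrow> nat \<Rightarrow> complex" where
  "disp_kernel b k l = (\<Sum>i\<le>min k l. b ^ (k - i) * (- cnj b) ^ (l - i) /
       of_real (fact i * fact (k - i) * fact (l - i)))"

definition disp_kernel_term :: "complex \<Rightarrow> nat \<Rightarrow> nat \<Rightarrow> nat \<Rightarrow> complex" where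
  "disp_kernel_term b k l i = (if i \<le> k \<and> i \<le> l then b ^ (k - i) * (- cnj b) ^ (l - i) /
       of_real (fact i * fact (k - i) * fact (l - i)) else 0)"

lemma disp_kernel_eq_sum_term:
  assumes "min k l \<le> K"
  shows "disp_kernel b k l = (\<Sum>i\<le>K. disp_kernel_term b k l i)"
proof -
  have "disp_kernel b k l = (\<Sum>i\<le>min k l. disp_kernel_term b k l i)"
    unfolding disp_kernel_def disp_kernel_term_def by (rule sum.cong) auto
  also have "\<dots> = (\<Sum>i\<le>K. disp_kernel_term b k l i)"
    by (rule sum.mono_neutral_left) (use assms in \<open>auto simp: disp_kernel_term_def\<close>)
  finally show ?thesis .
qed

lemma disp_elem_eq_kernel:
  "disp_elem b m k =
     of_real (exp (- (cmod b)\<^sup>2 / 2) * sqrt (fact m * fact k)) * disp_kernel b m k"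
  unfolding disp_elem_def disp_kernel_def by (simp add: sum_distrib_left field_simps)

lemma disp_kernel_term_Suc_left:
  assumes "1 \<le> l"
  shows "of_nat (Suc k) * disp_kernel_term b (Suc k) l i = b * disp_kernel_term b k l i +
     (if i = 0 then 0 else disp_kernel_term b k (l - 1) (i - 1))"
proof (cases "i \<le> Suc k \<and> i \<le> l")
  case False
  then show ?thesis using assms by (auto simp: disp_kernel_term_def)
next
  case True
  then obtain a c where ka: "Suc k = i + a" and lc: "l = i + c"
    by (metis le_add_diff_inverse)
  show ?thesis
  proof (cases i)
    case 0
    then show ?thesis using ka lc by (auto simp: disp_kernel_term_def field_simps)
  next
    case (Suc i')
    show ?thesis
    proof (cases a)
      case 0
      then have k: "k = i'" and l: "l = Suc (c + i')" using ka lc Suc by auto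
      have "fact c * fact i' + fact c * (fact i' * complex_of_nat i') =
          of_real (fact c * fact i' * (1 + real i'))" by (simp add: algebra_simps)
      then have "fact c * fact i' + fact c * (fact i' * complex_of_nat i') \<noteq> 0"
        by (simp del: of_real_mult)
      then show ?thesis using Suc 0 k l by (auto simp: disp_kernel_term_def field_simps)
    next
      case (Suc a')
      define w where "w = b ^ a' * (- cnj b) ^ c / of_real (fact i' * fact a' * fact c)"
      have k: "k = Suc (a' + i')" and l: "l = Suc (c + i')"
        using ka lc Suc \<open>i = Suc i'\<close> by auto
      have e1: "disp_kernel_term b (Suc k) l i = b * w / (of_nat (Suc i') * of_nat (Suc a'))"
        and e2: "disp_kernel_term b k l i = w / of_nat (Suc i')"
        and e3: "disp_kernel_term b k (l - 1) (i - 1) = b * w / of_nat (Suc a')"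
        unfolding disp_kernel_term_def w_def k l \<open>i = Suc i'\<close> by (simp_all add: field_simps)
      have "of_nat (Suc k) = (of_nat (Suc i') + of_nat (Suc a') :: complex)" using k by simp
      then have "of_nat (Suc k) * disp_kernel_term b (Suc k) l i =
          (of_nat (Suc i') + of_nat (Suc a')) * (b * w / (of_nat (Suc i') * of_nat (Suc a')))"
        using e1 by simp
      also have "\<dots> = b * (w / of_nat (Suc i')) + b * w / of_nat (Suc a')"
        by (simp add: field_simps del: of_nat_Suc)
      finally show ?thesis using e2 e3 \<open>i = Suc i'\<close> by simp
    qed
  qed
qed

text \<open>The ladder relations \<open>[a, D(b)] = b D(b)\<close> and \<open>[a\<^sup>\<dagger>, D(b)] = cnj b D(b)\<close> in the Fock basis.\<close>

lemma disp_kernel_Suc_left: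
  "of_nat (Suc k) * disp_kernel b (Suc k) l =
     (if l = 0 then 0 else disp_kernel b k (l - 1)) + b * disp_kernel b k l"
proof (cases "l = 0")
  case True
  then show ?thesis unfolding disp_kernel_def by (simp add: field_simps del: of_nat_Suc)
next
  case False
  define K where "K = k + l"
  have "of_nat (Suc k) * disp_kernel b (Suc k) l =
      of_nat (Suc k) * (\<Sum>i\<le>Suc K. disp_kernel_term b (Suc k) l i)"
    by (subst disp_kernel_eq_sum_term[where K = "Suc K"]) (auto simp: K_def)
  also have "\<dots> = (\<Sum>i\<le>Suc K. b * disp_kernel_term b k l i +
      (if i = 0 then 0 else disp_kernel_term b k (l - 1) (i - 1)))"
    unfolding sum_distrib_left using False disp_kernel_term_Suc_left[of l k b]
    by (intro sum.cong) (auto simp del: of_nat_Suc)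
  also have "\<dots> = b * (\<Sum>i\<le>Suc K. disp_kernel_term b k l i) +
      (\<Sum>i\<le>K. disp_kernel_term b k (l - 1) i)"
    by (simp add: sum.distrib sum_distrib_left sum.atMost_Suc_shift distrib_left
        del: sum.atMost_Suc)
  also have "\<dots> = b * disp_kernel b k l + disp_kernel b k (l - 1)"
    using disp_kernel_eq_sum_term[of k l "Suc K" b] disp_kernel_eq_sum_term[of k "l - 1" K b]
    by (simp only: K_def min_le_iff_disj le_add1 le_SucI disj_not1 simp_thms)
  finally show ?thesis using False by simp
qed

lemma disp_kernel_swap: "disp_kernel b k l = disp_kernel (- cnj b) l k"
  unfolding disp_kernel_def by (simp add: min.commute mult.commute mult.left_commute)

lemma disp_kernel_Suc_right:
  "of_nat (Suc l) * disp_kernel b k (Suc l) =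
     (if k = 0 then 0 else disp_kernel b (k - 1) l) - cnj b * disp_kernel b k l"
  using disp_kernel_Suc_left[of l "- cnj b" k] by (simp add: disp_kernel_swap[symmetric])

lemma disp_kernel_0_left: "disp_kernel b 0 l = (- cnj b) ^ l / of_real (fact l)"
  unfolding disp_kernel_def by simp

lemma disp_kernel_0_right: "disp_kernel b l 0 = b ^ l / of_real (fact l)"
  unfolding disp_kernel_def by simp

lemma cnj_disp_kernel: "cnj (disp_kernel b k l) = (-1) ^ (k + l) * disp_kernel b l k"
proof -
  have cnj_pow: "cnj (b ^ n) = (-1) ^ n * (- cnj b) ^ n" "cnj ((- cnj b) ^ n) = (-1) ^ n * b ^ n"
    for n by (simp_all add: power_mult_distrib[symmetric])
  have "cnj (b ^ (k - i) * (- cnj b) ^ (l - i) / of_real (fact i * fact (k - i) * fact (l - i))) =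
     (-1) ^ (k + l) * (b ^ (l - i) * (- cnj b) ^ (k - i) /
       of_real (fact i * fact (l - i) * fact (k - i)))"
    if "i \<in> {..min k l}" for i
  proof -
    have "k + l = (k - i) + (l - i) + 2 * i" using that by simp
    then have "(-1 :: complex) ^ (k + l) = (-1) ^ (k - i) * (-1) ^ (l - i)"
      by (simp only: power_add power_mult) simp
    then show ?thesis
      by (simp only: complex_cnj_mult complex_cnj_divide complex_cnj_complex_of_real cnj_pow)
        (simp add: mult_ac)
  qed
  then have "cnj (disp_kernel b k l) = (\<Sum>i\<le>min k l. (-1) ^ (k + l) *
      (b ^ (l - i) * (- cnj b) ^ (k - i) / of_real (fact i * fact (l - i) * fact (k - i))))"
    unfolding disp_kernel_def cnj_sum by (rule sum.cong[OF refl])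
  then show ?thesis
    unfolding disp_kernel_def sum_distrib_left by (simp only: min.commute)
qed

lemma sums_shift_right:
  fixes f :: "nat \<Rightarrow> 'a::real_normed_vector"
  assumes "f sums s"
  shows "(\<lambda>l. if l = 0 then 0 else f (l - 1)) sums s"
  using assms sums_Suc_iff[of "\<lambda>l. if l = 0 then 0 else f (l - 1)" s] by simp

text \<open>
  The matrix form of \<open>D(a) (-1)\<^sup>n D(a)\<^sup>\<dagger> = D(2a) (-1)\<^sup>n\<close>; both sides obey the ladder
  recursions.
\<close>

lemma disp_kernel_compose_0_sums:
  "(\<lambda>l. (- cnj a) ^ l * disp_kernel a l k) sums
     (of_real (exp (- (cmod a)\<^sup>2)) * disp_kernel (2 * a) 0 k)"
proof (induction k)
  case 0
  have "(of_real (- (cmod a)\<^sup>2) :: complex) = a * (- cnj a)"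
    using complex_norm_square[of a] by (simp del: of_real_power)
  then have "(of_real (- (cmod a)\<^sup>2) :: complex) ^ l /\<^sub>R fact l =
      (- cnj a) ^ l * disp_kernel a l 0" for l
    by (simp only: disp_kernel_0_right scaleR_conv_of_real power_mult_distrib)
      (simp add: field_simps)
  then show ?case
    using exp_converges[of "of_real (- (cmod a)\<^sup>2) :: complex"]
    by (simp add: disp_kernel_0_left exp_of_real[symmetric])
next
  case (Suc k)
  let ?c = "- cnj a" and ?S = "\<lambda>k. of_real (exp (- (cmod a)\<^sup>2)) * disp_kernel (2 * a) 0 k"
  have "(\<lambda>l. ?c * (if l = 0 then 0 else ?c ^ (l - 1) * disp_kernel a (l - 1) k) +
      ?c * (?c ^ l * disp_kernel a l k)) sums (?c * ?S k + ?c * ?S k)"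
    by (intro sums_add sums_mult sums_shift_right Suc.IH)
  moreover have "?c * (if l = 0 then 0 else ?c ^ (l - 1) * disp_kernel a (l - 1) k) +
      ?c * (?c ^ l * disp_kernel a l k) = of_nat (Suc k) * (?c ^ l * disp_kernel a l (Suc k))" for l
  proof -
    have "of_nat (Suc k) * (?c ^ l * disp_kernel a l (Suc k)) =
        ?c ^ l * (of_nat (Suc k) * disp_kernel a l (Suc k))"
      by (simp only: mult_ac)
    also have "\<dots> = ?c * (if l = 0 then 0 else ?c ^ (l - 1) * disp_kernel a (l - 1) k) +
        ?c * (?c ^ l * disp_kernel a l k)"
      by (simp only: disp_kernel_Suc_right) (cases l; simp add: algebra_simps)
    finally show ?thesis ..
  qed
  moreover have "?c * ?S k + ?c * ?S k = of_nat (Suc k) * ?S (Suc k)"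
    by (simp add: disp_kernel_0_left field_simps del: of_nat_Suc)
  ultimately show ?case by (simp add: sums_mult_iff del: of_nat_Suc)
qed

lemma disp_kernel_compose_sums:
  "(\<lambda>l. of_real (fact l) * disp_kernel a m l * disp_kernel a l k) sums
     (of_real (exp (- (cmod a)\<^sup>2)) * disp_kernel (2 * a) m k)"
proof (induction m arbitrary: k)
  case 0
  then show ?case using disp_kernel_compose_0_sums by (simp add: disp_kernel_0_left)
next
  case (Suc m)
  let ?C = "of_real (exp (- (cmod a)\<^sup>2)) :: complex"
    and ?F = "\<lambda>m k l. of_real (fact l) * disp_kernel a m l * disp_kernel a l k"
  define g where "g l = (if k = 0 then 0 else ?F m (k - 1) l) + a * ?F m k l" for l
  define s where "s = (if k = 0 then 0 else ?C * disp_kernel (2 * a) m (k - 1)) +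
      a * (?C * disp_kernel (2 * a) m k)"
  have "(\<lambda>l. if k = 0 then 0 else ?F m (k - 1) l) sums
      (if k = 0 then 0 else ?C * disp_kernel (2 * a) m (k - 1))"
    using Suc.IH by (cases "k = 0") simp_all
  then have "g sums s" unfolding g_def s_def by (intro sums_add sums_mult Suc.IH)
  then have "(\<lambda>l. (if l = 0 then 0 else g (l - 1)) + a * ?F m k l) sums
      (s + a * (?C * disp_kernel (2 * a) m k))"
    by (intro sums_add sums_shift_right sums_mult Suc.IH)
  moreover have "(if l = 0 then 0 else g (l - 1)) + a * ?F m k l =
      of_nat (Suc m) * ?F (Suc m) k l" for l
  proof -
    have "of_nat (Suc m) * ?F (Suc m) k l =
        of_real (fact l) * (of_nat (Suc m) * disp_kernel a (Suc m) l) * disp_kernel a l k"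
      by (simp only: mult_ac)
    also have "\<dots> = (if l = 0 then 0
        else of_real (fact l) * disp_kernel a m (l - 1) * disp_kernel a l k) + a * ?F m k l"
      by (simp only: disp_kernel_Suc_left) (simp add: algebra_simps)
    also have "\<dots> = (if l = 0 then 0 else g (l - 1)) + a * ?F m k l"
    proof (cases l)
      case (Suc l')
      have "of_real (fact l) * disp_kernel a m l' * disp_kernel a l k =
          of_real (fact l') * disp_kernel a m l' * (of_nat (Suc l') * disp_kernel a (Suc l') k)"
        using Suc by (simp add: algebra_simps)
      also have "\<dots> = g l'"
        by (simp only: disp_kernel_Suc_left) (simp add: g_def algebra_simps)
      finally show ?thesis using Suc by simp
    qed simp
    finally show ?thesis ..
  qed
  moreover have "s + a * (?C * disp_kernel (2 * a) m k) =
      of_nat (Suc m) * (?C * disp_kernel (2 * a) (Suc m) k)"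
  proof -
    have "of_nat (Suc m) * (?C * disp_kernel (2 * a) (Suc m) k) =
        ?C * (of_nat (Suc m) * disp_kernel (2 * a) (Suc m) k)"
      by (simp only: mult_ac)
    also have "\<dots> = s + a * (?C * disp_kernel (2 * a) m k)"
      by (simp only: disp_kernel_Suc_left) (simp add: s_def algebra_simps)
    finally show ?thesis ..
  qed
  ultimately show ?case by (simp add: sums_mult_iff del: of_nat_Suc)
qed

lemma parity_elem_eq_kernel:
  "parity_elem a m k =
     of_real ((-1) ^ k * exp (- 2 * (cmod a)\<^sup>2) * sqrt (fact m * fact k)) * disp_kernel (2 * a) m k"
proof -
  define e where "e = exp (- (cmod a)\<^sup>2 / 2)"
  define K where "K = (of_real (e * e * sqrt (fact m * fact k) * (-1) ^ k) :: complex)"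
  have trm: "disp_elem a m l * (-1) ^ l * cnj (disp_elem a k l) =
      K * (of_real (fact l) * disp_kernel a m l * disp_kernel a l k)" for l
  proof -
    have s: "sqrt (fact m * fact l) * sqrt (fact k * fact l) =
        sqrt (fact m * fact k) * (fact l :: real)"
      by (simp add: real_sqrt_mult)
    have sg: "(-1 :: complex) ^ l * (-1) ^ (k + l) = (-1) ^ k"
      by (simp add: power_add mult_ac flip: power_mult_distrib)
    have "disp_elem a m l * (-1) ^ l * cnj (disp_elem a k l) =
       of_real (e * sqrt (fact m * fact l)) * of_real (e * sqrt (fact k * fact l)) *
       (disp_kernel a m l * ((-1) ^ l * (-1) ^ (k + l)) * disp_kernel a l k)"
      unfolding disp_elem_eq_kernel e_def by (simp add: cnj_disp_kernel mult_ac)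
    also have "\<dots> = K * (of_real (fact l) * disp_kernel a m l * disp_kernel a l k)"
    proof -
      have s2: "complex_of_real (e * sqrt (fact m * fact l)) *
          complex_of_real (e * sqrt (fact k * fact l)) =
          of_real (e * e * sqrt (fact m * fact k)) * of_real (fact l)"
        unfolding of_real_mult[symmetric] by (metis s mult_ac)
      show ?thesis unfolding sg K_def s2 by (simp add: mult_ac)
    qed
    finally show ?thesis .
  qed
  have "(\<lambda>l. disp_elem a m l * (-1) ^ l * cnj (disp_elem a k l)) sums
      (K * (of_real (exp (- (cmod a)\<^sup>2)) * disp_kernel (2 * a) m k))"
    unfolding trm by (intro sums_mult disp_kernel_compose_sums)
  then have "parity_elem a m k = K * (of_real (exp (- (cmod a)\<^sup>2)) * disp_kernel (2 * a) m k)"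
    unfolding parity_elem_def by (simp add: sums_iff)
  moreover have "e * e = exp (- (cmod a)\<^sup>2)"
    unfolding e_def by (simp flip: exp_add)
  moreover have "exp (- (cmod a)\<^sup>2) * exp (- (cmod a)\<^sup>2) = exp (- 2 * (cmod a)\<^sup>2)"
    by (simp flip: exp_add)
  ultimately show ?thesis unfolding K_def
    by (simp add: mult_ac flip: of_real_mult)
qed

lemma disp_kernel_rotate:
  assumes "cmod w = 1"
  shows "disp_kernel (w * b) m k = w ^ m * cnj w ^ k * disp_kernel b m k"
proof -
  have wc: "w * cnj w = 1" using assms complex_norm_square[of w] by simp
  have t: "w ^ (m - i) * cnj w ^ (k - i) = w ^ m * cnj w ^ k" if "i \<le> m" "i \<le> k" for i
  proof -
    have "m = i + (m - i)" "k = i + (k - i)" using that by auto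
    then obtain p q where "m = i + p" "k = i + q" by blast
    then have "w ^ m * cnj w ^ k = w ^ p * cnj w ^ q * (w ^ i * cnj w ^ i)"
      by (simp only: power_add mult_ac)
    also have "\<dots> = w ^ p * cnj w ^ q"
      by (simp only: power_mult_distrib[symmetric] wc power_one mult_1_right)
    finally show ?thesis using \<open>m = i + p\<close> \<open>k = i + q\<close> by simp
  qed
  show ?thesis
    unfolding disp_kernel_def sum_distrib_left
  proof (intro sum.cong refl)
    fix i assume "i \<in> {..min m k}"
    then have "i \<le> m" "i \<le> k" by auto
    have e1: "(w * b) ^ (m - i) = w ^ (m - i) * b ^ (m - i)" by (rule power_mult_distrib)
    have e2: "(- cnj (w * b)) ^ (k - i) = cnj w ^ (k - i) * (- cnj b) ^ (k - i)"
      by (simp only: complex_cnj_mult mult_minus_right[symmetric] power_mult_distrib)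
    let ?d = "of_real (fact i * fact (m - i) * fact (k - i))"
    show "(w * b) ^ (m - i) * (- cnj (w * b)) ^ (k - i) / ?d =
      w ^ m * cnj w ^ k * (b ^ (m - i) * (- cnj b) ^ (k - i) / ?d)"
      unfolding e1 e2 t[OF \<open>i \<le> m\<close> \<open>i \<le> k\<close>, symmetric] by (simp only: mult_ac times_divide_eq_right)
  qed
qed

lemma parity_elem_rotate:
  assumes "cmod w = 1"
  shows "parity_elem (w * a) m k = w ^ m * cnj w ^ k * parity_elem a m k"
proof -
  have "2 * (w * a) = w * (2 * a)" by simp
  then have "disp_kernel (2 * (w * a)) m k = w ^ m * cnj w ^ k * disp_kernel (2 * a) m k"
    by (simp only: disp_kernel_rotate[OF assms])
  moreover have "cmod (w * a) = cmod a" using assms by (simp add: norm_mult)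
  ultimately show ?thesis unfolding parity_elem_eq_kernel by (simp only: mult_ac)
qed

lemma cnj_parity_elem: "cnj (parity_elem a m k) = parity_elem a k m"
proof -
  have sg: "(-1::complex) ^ k * (-1) ^ (m + k) = (-1) ^ m"
    by (simp add: power_add mult_ac flip: power_mult_distrib)
  have "cnj (parity_elem a m k) = of_real (exp (- 2 * (cmod a)\<^sup>2) * sqrt (fact m * fact k)) *
      ((-1) ^ k * (-1) ^ (m + k)) * disp_kernel (2 * a) k m"
    unfolding parity_elem_eq_kernel by (simp add: cnj_disp_kernel mult_ac)
  then show ?thesis unfolding parity_elem_eq_kernel sg by (simp add: mult_ac)
qed

section \<open>Laguerre polynomials and triangular families\<close>

text \<open>
  \<open>parity_poly m j\<close> is \<open>(-1)\<^sup>j sqrt (j! / (j + m)!) L\<^sub>j\<^sup>(\<^sup>m\<^sup>)(4x)\<close>, a rescaled associated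
  Laguerre polynomial.
\<close>

definition parity_poly :: "nat \<Rightarrow> nat \<Rightarrow> real poly" where
  "parity_poly m j = (\<Sum>i\<le>j. monom ((-1) ^ j * sqrt (fact (j + m) * fact j) * (-4) ^ (j - i) /
       (fact i * fact (j + m - i) * fact (j - i))) (j - i))"

lemma poly_parity_poly:
  "poly (parity_poly m j) x = (\<Sum>i\<le>j. (-1) ^ j * sqrt (fact (j + m) * fact j) * (-4) ^ (j - i) /
       (fact i * fact (j + m - i) * fact (j - i)) * x ^ (j - i))"
  unfolding parity_poly_def by (simp add: poly_sum poly_monom)

lemma coeff_parity_poly:
  "coeff (parity_poly m j) t = (if t \<le> j then (-1) ^ j * sqrt (fact (j + m) * fact j) * (-4) ^ t /
       (fact (j - t) * fact (m + t) * fact t) else 0)"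
proof -
  have "coeff (parity_poly m j) t = (\<Sum>i\<le>j. if i = j - t \<and> t \<le> j
      then (-1) ^ j * sqrt (fact (j + m) * fact j) * (-4) ^ t /
        (fact (j - t) * fact (m + t) * fact t)
      else 0)"
    unfolding parity_poly_def coeff_sum coeff_monom by (intro sum.cong refl) auto
  then show ?thesis by (simp add: sum.delta)
qed

lemma degree_parity_poly: "degree (parity_poly m j) \<le> j"
  by (rule degree_le) (simp add: coeff_parity_poly)

lemma coeff_parity_poly_self: "coeff (parity_poly m j) j \<noteq> 0"
  by (simp add: coeff_parity_poly)

lemma parity_elem_offdiag:
  "parity_elem a (j + m) j =
     (2 * a) ^ m * of_real (exp (- 2 * (cmod a)\<^sup>2) * poly (parity_poly m j) ((cmod a)\<^sup>2))"
proof -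
  have aa: "(2 * a) * (- cnj (2 * a)) = of_real (-4 * (cmod a)\<^sup>2)"
    using complex_norm_square[of a] by (simp del: of_real_power)
  have "(2 * a) ^ (j + m - i) * (- cnj (2 * a)) ^ (j - i) =
      (2 * a) ^ m * of_real ((-4) ^ (j - i) * ((cmod a)\<^sup>2) ^ (j - i))"
    if "i \<in> {..j}" for i
  proof -
    have "j + m - i = m + (j - i)" using that by simp
    then have "(2 * a) ^ (j + m - i) * (- cnj (2 * a)) ^ (j - i) =
        (2 * a) ^ m * ((2 * a) * (- cnj (2 * a))) ^ (j - i)"
      by (simp only: power_add power_mult_distrib mult_ac)
    then show ?thesis unfolding aa by (simp only: of_real_power[symmetric] power_mult_distrib)
  qed
  then have "disp_kernel (2 * a) (j + m) j = (2 * a) ^ m * of_real (\<Sum>i\<le>j.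
      (-4) ^ (j - i) * ((cmod a)\<^sup>2) ^ (j - i) / (fact i * fact (j + m - i) * fact (j - i)))"
    unfolding disp_kernel_def of_real_sum sum_distrib_left min_absorb2[OF le_add1]
    by (intro sum.cong refl) (simp add: of_real_divide)
  then show ?thesis unfolding parity_elem_eq_kernel poly_parity_poly
    by (simp add: sum_distrib_left real_sqrt_mult mult_ac)
qed

lemma coeff_sum_smult_triangular:
  fixes B :: "nat \<Rightarrow> 'a::field poly"
  assumes "\<And>j. degree (B j) \<le> j"
  shows "coeff (\<Sum>j\<le>d. smult (c j) (B j)) d = c d * coeff (B d) d"
proof -
  have "coeff (\<Sum>j\<le>d. smult (c j) (B j)) d = (\<Sum>j\<le>d. if j = d then c d * coeff (B d) d else 0)"
    unfolding coeff_sum coeff_smult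
  proof (intro sum.cong refl)
    fix j assume "j \<in> {..d}"
    then show "c j * coeff (B j) d = (if j = d then c d * coeff (B d) d else 0)"
      using assms[of j] by (auto simp: coeff_eq_0)
  qed
  then show ?thesis by simp
qed

lemma degree_sum_smult_triangular_le:
  fixes B :: "nat \<Rightarrow> 'a::field poly"
  assumes "\<And>j. degree (B j) \<le> j"
  shows "degree (\<Sum>j\<le>d. smult (c j) (B j)) \<le> d"
proof (rule degree_sum_le)
  fix j assume "j \<in> {..d}"
  then show "degree (smult (c j) (B j)) \<le> d"
    using assms[of j] degree_smult_le[of "c j" "B j"] by simp
qed simp

lemma sum_smult_triangular_eq_0D:
  fixes B :: "nat \<Rightarrow> 'a::field poly"
  assumes "\<And>j. degree (B j) \<le> j" and "\<And>j. coeff (B j) j \<noteq> 0"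
    and "(\<Sum>j\<le>d. smult (c j) (B j)) = 0" and "j \<le> d"
  shows "c j = 0"
  using assms(3,4)
proof (induction d arbitrary: j)
  case 0
  then show ?case using assms(2)[of 0] by auto
next
  case (Suc d)
  have "c (Suc d) * coeff (B (Suc d)) (Suc d) = 0"
    using coeff_sum_smult_triangular[OF assms(1), of c "Suc d"] Suc.prems(1)
    by (simp del: sum.atMost_Suc)
  then have "c (Suc d) = 0" using assms(2)[of "Suc d"] by simp
  with Suc show ?case by (cases "j = Suc d") auto
qed

lemma ex_sum_smult_triangular_eq:
  fixes B :: "nat \<Rightarrow> 'a::field poly"
  assumes "\<And>j. degree (B j) \<le> j" and "\<And>j. coeff (B j) j \<noteq> 0" and "degree e \<le> d"
  shows "\<exists>c. e = (\<Sum>j\<le>d. smult (c j) (B j))"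
  using assms(3)
proof (induction d arbitrary: e)
  case 0
  have "e = smult (coeff e 0 / coeff (B 0) 0) (B 0)"
  proof (rule poly_eqI)
    fix i
    show "coeff e i = coeff (smult (coeff e 0 / coeff (B 0) 0) (B 0)) i"
      using 0 assms(1)[of 0] assms(2)[of 0] by (cases i) (auto simp: coeff_eq_0)
  qed
  then show ?case by auto
next
  case (Suc d)
  define b where "b = coeff e (Suc d) / coeff (B (Suc d)) (Suc d)"
  have "degree (e - smult b (B (Suc d))) \<le> d"
  proof (rule degree_le, intro allI impI)
    fix i assume "d < i"
    then consider "i = Suc d" | "Suc d < i" by linarith
    then show "coeff (e - smult b (B (Suc d))) i = 0"
    proof cases
      case 1
      then show ?thesis using assms(2)[of "Suc d"] by (simp add: b_def)
    next
      case 2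
      then show ?thesis using Suc.prems assms(1)[of "Suc d"] by (simp add: coeff_eq_0)
    qed
  qed
  then obtain c where "e - smult b (B (Suc d)) = (\<Sum>j\<le>d. smult (c j) (B j))"
    using Suc.IH by blast
  then have "e = (\<Sum>j\<le>Suc d. smult ((c(Suc d := b)) j) (B j))"
    by (simp add: algebra_simps)
  then show ?case by blast
qed

lemma smult_sum_right: "smult c (\<Sum>i\<in>S. f i) = (\<Sum>i\<in>S. smult c (f i))"
  by (induction S rule: infinite_finite_induct) (simp_all add: smult_add_right)

section \<open>Domination of polynomials on the half-line\<close>

lemma poly_eventually_dominated:
  fixes e p :: "real poly"
  assumes "degree e \<le> degree p" and "p \<noteq> 0"
  shows "\<exists>R C. \<forall>x\<ge>R. \<bar>poly e x\<bar> \<le> C * \<bar>poly p x\<bar>"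
proof -
  define d where "d = degree p"
  have lim_e: "((\<lambda>x. poly e x / x ^ d) \<longlongrightarrow> coeff e d) at_infinity"
  proof (cases "degree e = d")
    case True
    then show ?thesis using poly_divide_tendsto_aux[of e] by simp
  next
    case False
    then have "degree e < degree (monom 1 d :: real poly)"
      using assms(1) by (simp add: d_def degree_monom_eq)
    from poly_divide_tendsto_0_at_infinity[OF this] show ?thesis
      using False assms(1) by (simp add: poly_monom coeff_eq_0 d_def)
  qed
  have lim_p: "((\<lambda>x. poly p x / x ^ d) \<longlongrightarrow> lead_coeff p) at_infinity"
    using poly_divide_tendsto_aux[of p] by (simp add: d_def)
  define C where "C = \<bar>coeff e d / lead_coeff p\<bar> + 1"
  have "((\<lambda>x. (poly e x / x ^ d) / (poly p x / x ^ d)) \<longlongrightarrow> coeff e d / lead_coeff p) at_infinity"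
    using assms(2) by (intro tendsto_divide lim_e lim_p) simp
  from order_tendstoD(2)[OF tendsto_rabs[OF this], of C]
  have "\<forall>\<^sub>F x in at_infinity. \<bar>(poly e x / x ^ d) / (poly p x / x ^ d)\<bar> < C"
    by (simp add: C_def)
  moreover have "\<forall>\<^sub>F x in at_infinity. poly p x / x ^ d \<noteq> 0"
    using assms(2) by (intro tendsto_imp_eventually_ne[OF lim_p]) simp
  ultimately have "\<forall>\<^sub>F x in at_infinity. \<bar>poly e x\<bar> \<le> C * \<bar>poly p x\<bar>"
  proof eventually_elim
    case (elim x)
    then have "x ^ d \<noteq> 0" and "poly p x \<noteq> 0" by auto
    with elim(1) show ?case by (simp add: abs_mult abs_divide field_simps split: if_splits)
  qed
  then have "\<forall>\<^sub>F x in at_top. \<bar>poly e x\<bar> \<le> C * \<bar>poly p x\<bar>"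
    by (rule filter_leD[OF at_top_le_at_infinity])
  then show ?thesis by (auto simp: eventually_at_top_linorder)
qed

lemma poly_bounded_by_multiple_on_nonneg:
  fixes e p :: "real poly"
  assumes "degree e \<le> degree p" and "p \<noteq> 0"
    and bound: "\<And>x. 0 \<le> x \<Longrightarrow> \<bar>poly e x\<bar> \<le> (1 + x) * poly p x"
  shows "\<exists>K. \<forall>x\<ge>0. \<bar>poly e x\<bar> \<le> K * poly p x"
proof -
  obtain R C where RC: "\<And>x. R \<le> x \<Longrightarrow> \<bar>poly e x\<bar> \<le> C * \<bar>poly p x\<bar>"
    using poly_eventually_dominated[OF assms(1,2)] by blast
  have p_nonneg: "0 \<le> poly p x" if "0 \<le> x" for x
    using order_trans[OF abs_ge_zero bound[OF that]] that by (simp add: zero_le_mult_iff)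
  have "\<bar>poly e x\<bar> \<le> max C (1 + \<bar>R\<bar>) * poly p x" if "0 \<le> x" for x
  proof (cases "R \<le> x")
    case True
    then have "\<bar>poly e x\<bar> \<le> C * poly p x" using RC[OF True] p_nonneg[OF that] by simp
    also have "\<dots> \<le> max C (1 + \<bar>R\<bar>) * poly p x"
      using p_nonneg[OF that] by (intro mult_right_mono) auto
    finally show ?thesis .
  next
    case False
    have "\<bar>poly e x\<bar> \<le> (1 + x) * poly p x" using bound[OF that] .
    also have "\<dots> \<le> max C (1 + \<bar>R\<bar>) * poly p x"
      using False p_nonneg[OF that] by (intro mult_right_mono) auto
    finally show ?thesis .
  qed
  then show ?thesis by blast
qed

lemma monom_1_mult_ne_smult:
  fixes p u :: "real poly"
  assumes "u \<noteq> 0" and bound: "\<And>r. 0 \<le> r \<Longrightarrow> 2 * r * \<bar>poly u (r\<^sup>2)\<bar> \<le> poly p (r\<^sup>2)"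
  shows "monom 1 1 * u \<noteq> smult \<tau> p"
proof
  assume eq: "monom 1 1 * u = smult \<tau> p"
  then have "\<tau> \<noteq> 0" using assms(1) by auto
  have "poly u x = 0" if x: "x \<in> {0<..<4 * \<tau>\<^sup>2}" for x
  proof (rule ccontr)
    assume "poly u x \<noteq> 0"
    define r where "r = sqrt x"
    have r: "0 < r" "x = r\<^sup>2" and "r < sqrt (4 * \<tau>\<^sup>2)" using x by (auto simp: r_def)
    then have "r < 2 * \<bar>\<tau>\<bar>" by (simp add: real_sqrt_mult)
    have "x * poly u x = \<tau> * poly p x"
      using arg_cong[OF eq, of "\<lambda>q. poly q x"] by (simp add: poly_monom)
    have "0 \<le> poly p x" using bound[of r] r by (simp add: order_trans[rotated])
    then have "\<bar>\<tau>\<bar> * poly p x = \<bar>\<tau> * poly p x\<bar>" by (simp add: abs_mult)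
    also have "\<dots> = \<bar>x * poly u x\<bar>" using \<open>x * poly u x = \<tau> * poly p x\<close> by simp
    also have "\<dots> = r * (r * \<bar>poly u x\<bar>)" using r by (simp add: abs_mult power2_eq_square)
    finally have "(2 * \<bar>\<tau>\<bar>) * (r * \<bar>poly u x\<bar>) \<le> r * (r * \<bar>poly u x\<bar>)"
      using mult_left_mono[OF bound[of r], of "\<bar>\<tau>\<bar>"] r by (simp add: mult_ac)
    then have "2 * \<bar>\<tau>\<bar> \<le> r"
      by (rule mult_right_le_imp_le) (use r \<open>poly u x \<noteq> 0\<close> in simp)
    then show False using \<open>r < 2 * \<bar>\<tau>\<bar>\<close> by simp
  qed
  then have "{0<..<4 * \<tau>\<^sup>2} \<subseteq> {x. poly u x = 0}" by blast
  moreover have "infinite {0<..<4 * \<tau>\<^sup>2}" using \<open>\<tau> \<noteq> 0\<close> by simp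
  ultimately show False using poly_roots_finite[OF assms(1)] finite_subset by blast
qed

lemma ex_poly_dominated_not_multiple:
  fixes p u :: "real poly"
  assumes "1 \<le> m" and "m \<le> degree p" and "degree u \<le> degree p - m" and "u \<noteq> 0"
    and bound: "\<And>r. 0 \<le> r \<Longrightarrow> (2 * r) ^ m * \<bar>poly u (r\<^sup>2)\<bar> \<le> poly p (r\<^sup>2)"
  shows "\<exists>e K. degree e \<le> degree p \<and> (\<forall>\<tau>. e \<noteq> smult \<tau> p) \<and>
    (\<forall>x\<ge>0. \<bar>poly e x\<bar> \<le> K * poly p x)"
proof -
  define h where "h = (m + 1) div 2"
  define e where "e = monom 1 h * u"
  have deg_e: "degree e \<le> h + (degree p - m)"
    using degree_mult_le[of "monom 1 h" u] degree_monom_le[of "1::real" h] assms(3)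
    unfolding e_def by linarith
  have "h \<le> m" using assms(1) by (simp add: h_def)
  then have "degree e \<le> degree p" using deg_e assms(2) by linarith
  have "\<bar>poly e x\<bar> \<le> (1 + x) * poly p x" if "0 \<le> x" for x
  proof -
    define r where "r = sqrt x"
    have r: "0 \<le> r" "x = r\<^sup>2" using that by (auto simp: r_def)
    have "r ^ m * \<bar>poly u x\<bar> \<le> (2 * r) ^ m * \<bar>poly u x\<bar>"
      using r by (intro mult_right_mono power_mono) auto
    also have "\<dots> \<le> poly p x" using bound[OF r(1)] r(2) by simp
    finally have u_bound: "r ^ m * \<bar>poly u x\<bar> \<le> poly p x" .
    then have "0 \<le> poly p x" using r(1) by (simp add: order_trans[rotated])
    have "\<bar>poly e x\<bar> = r ^ (2 * h) * \<bar>poly u x\<bar>"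
      using r by (simp add: e_def poly_monom abs_mult power_mult)
    also have "\<dots> \<le> (1 + x) * poly p x"
    proof (cases "even m")
      case True
      then have "r ^ (2 * h) * \<bar>poly u x\<bar> = r ^ m * \<bar>poly u x\<bar>"
        unfolding h_def by (metis dvd_mult_div_cancel even_succ_div_two)
      also have "\<dots> \<le> (1 + x) * poly p x"
        using u_bound \<open>0 \<le> poly p x\<close> that by (simp add: order_trans[OF _ mult_right_mono[of 1]])
      finally show ?thesis .
    next
      case False
      then have "r ^ (2 * h) * \<bar>poly u x\<bar> = r * (r ^ m * \<bar>poly u x\<bar>)"
        unfolding h_def by (simp add: odd_two_times_div_two_succ)
      also have "\<dots> \<le> r * poly p x" using u_bound r(1) by (rule mult_left_mono)
      also have "\<dots> \<le> (1 + x) * poly p x"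
      proof (rule mult_right_mono)
        have "0 \<le> (r - 1)\<^sup>2" by simp
        then have "0 \<le> r * r - 2 * r + 1" by (simp add: power2_eq_square algebra_simps)
        then show "r \<le> 1 + x" using r unfolding power2_eq_square by linarith
      qed fact
      finally show ?thesis .
    qed
    finally show ?thesis .
  qed
  moreover have "p \<noteq> 0" using assms(1,2) by auto
  ultimately obtain K where "\<forall>x\<ge>0. \<bar>poly e x\<bar> \<le> K * poly p x"
    using poly_bounded_by_multiple_on_nonneg \<open>degree e \<le> degree p\<close> by blast
  moreover have "e \<noteq> smult \<tau> p" for \<tau>
    \<comment> \<open>for \<open>m \<ge> 2\<close> the degree of \<open>e\<close> is too small; for \<open>m = 1\<close> the bound near \<open>0\<close> decides\<close>
  proof (cases "m = 1")
    case True
    then show ?thesis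
      using monom_1_mult_ne_smult[OF assms(4)] bound by (simp add: e_def h_def)
  next
    case False
    then have "degree e < degree p" using assms(1,2) deg_e by (simp add: h_def)
    moreover have "e \<noteq> 0" using assms(4) by (simp add: e_def)
    ultimately show ?thesis by auto
  qed
  ultimately show ?thesis using \<open>degree e \<le> degree p\<close> by blast
qed

section \<open>Averaging over rotations\<close>

definition root_unity :: "nat \<Rightarrow> nat \<Rightarrow> complex" where
  "root_unity N s = cis (2 * pi * real s / real N)"

lemma norm_root_unity [simp]: "cmod (root_unity N s) = 1"
  by (simp add: root_unity_def)

lemma root_unity_power_commute: "root_unity N s ^ a = root_unity N a ^ s"
  by (simp add: root_unity_def DeMoivre mult_ac)

lemma sum_root_unity_power_cnj:
  assumes "a < N" and "b < N"
  shows "(\<Sum>s<N. root_unity N s ^ a * cnj (root_unity N s) ^ b) = (if a = b then of_nat N else 0)"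
proof -
  let ?\<rho> = "root_unity N"
  have bij: "bij_betw ?\<rho> {..<N} {z. z ^ N = 1}"
    using bij_betw_roots_unity[of N] assms unfolding root_unity_def by simp
  have unit: "?\<rho> s * cnj (?\<rho> s) = 1" for s
    by (simp add: root_unity_def cis_cnj cis_mult)
  define z where "z = ?\<rho> a * cnj (?\<rho> b)"
  have "?\<rho> s ^ a * cnj (?\<rho> s) ^ b = z ^ s" for s
    by (simp add: z_def power_mult_distrib root_unity_power_commute[of N s] flip: complex_cnj_power)
  then have sum_eq: "(\<Sum>s<N. ?\<rho> s ^ a * cnj (?\<rho> s) ^ b) = (\<Sum>s<N. z ^ s)" by simp
  show ?thesis
  proof (cases "a = b")
    case True
    have "z = 1" using True unit[of b] by (simp only: z_def)
    then show ?thesis unfolding sum_eq using True by simp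
  next
    case False
    have "z \<noteq> 1"
    proof
      assume "z = 1"
      then have "?\<rho> a = ?\<rho> b" using unit[of b] unfolding z_def
        by (metis mult.assoc mult.commute mult_1_left)
      then show False
        using False assms bij_betw_imp_inj_on[OF bij] by (auto dest: inj_onD)
    qed
    moreover have "z ^ N = 1"
      using bij_betw_apply[OF bij, of a] bij_betw_apply[OF bij, of b] assms
      by (simp add: z_def power_mult_distrib flip: complex_cnj_power)
    ultimately show ?thesis using False by (simp add: sum_eq geometric_sum)
  qed
qed

section \<open>Wigner functions of truncated operators\<close>

definition parity_trace :: "nat \<Rightarrow> (nat \<Rightarrow> nat \<Rightarrow> complex) \<Rightarrow> complex \<Rightarrow> complex" where
  "parity_trace n A a = (\<Sum>j\<le>n. \<Sum>k\<le>n. A j k * parity_elem a k j)"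

lemma wigner_eq_parity_trace: "wigner n A a = 2 / pi * Re (parity_trace n A a)"
  unfolding wigner_def parity_trace_def ..

lemma wigner_nonneg_iff: "0 \<le> wigner n A a \<longleftrightarrow> 0 \<le> Re (parity_trace n A a)"
  using mult_le_cancel_left_pos[of "2 / pi" 0] by (simp add: wigner_eq_parity_trace)

lemma cnj_parity_trace:
  assumes "\<And>j k. D j k = cnj (D k j)"
  shows "cnj (parity_trace n D a) = parity_trace n D a"
proof -
  have "cnj (parity_trace n D a) = (\<Sum>j\<le>n. \<Sum>k\<le>n. D k j * parity_elem a j k)"
    unfolding parity_trace_def cnj_sum complex_cnj_mult cnj_parity_elem
    by (intro sum.cong refl) (metis assms complex_cnj_cnj)
  also have "\<dots> = parity_trace n D a" unfolding parity_trace_def by (rule sum.swap)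
  finally show ?thesis .
qed

lemma parity_trace_diff:
  "parity_trace n (\<lambda>j k. X j k - Y j k) a = parity_trace n X a - parity_trace n Y a"
  unfolding parity_trace_def by (simp add: sum_subtractf left_diff_distrib)

text \<open>
  By \<open>parity_elem_rotate\<close> the entry \<open>A j k\<close> contributes with the factor \<open>\<omega>\<^sup>k \<omega>\<^sup>-\<^sup>j\<^sup>-\<^sup>m\<close>,
  whose average over the \<open>N\<close>-th roots of unity vanishes unless \<open>k = j + m\<close>, since all
  exponents involved are below \<open>N\<close>.
\<close>

lemma sum_root_unity_parity_trace:
  assumes "m \<le> n" and "2 * n < N"
  shows "(\<Sum>s<N. cnj (root_unity N s) ^ m * parity_trace n A (root_unity N s * a)) =
    of_nat N * (\<Sum>j\<le>n - m. A j (j + m) * parity_elem a (j + m) j)"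
proof -
  let ?\<rho> = "root_unity N"
  have "(\<Sum>s<N. cnj (?\<rho> s) ^ m * parity_trace n A (?\<rho> s * a)) =
     (\<Sum>s<N. \<Sum>j\<le>n. \<Sum>k\<le>n. A j k * parity_elem a k j * (?\<rho> s ^ k * cnj (?\<rho> s) ^ (j + m)))"
    unfolding parity_trace_def parity_elem_rotate[OF norm_root_unity] sum_distrib_left
    by (intro sum.cong refl) (simp add: power_add mult_ac)
  also have "\<dots> = (\<Sum>j\<le>n. \<Sum>k\<le>n. A j k * parity_elem a k j *
      (\<Sum>s<N. ?\<rho> s ^ k * cnj (?\<rho> s) ^ (j + m)))"
    unfolding sum_distrib_left by (simp only: sum.swap[where A = "{..<N}"])
  also have "\<dots> = (\<Sum>j\<le>n. \<Sum>k\<le>n. if k = j + m then of_nat N * (A j k * parity_elem a k j) else 0)"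
  proof (intro sum.cong refl)
    fix j k assume "j \<in> {..n}" "k \<in> {..n}"
    then have "k < N" "j + m < N" using assms by auto
    then show "A j k * parity_elem a k j * (\<Sum>s<N. ?\<rho> s ^ k * cnj (?\<rho> s) ^ (j + m)) =
        (if k = j + m then of_nat N * (A j k * parity_elem a k j) else 0)"
      by (simp add: sum_root_unity_power_cnj)
  qed
  also have "\<dots> = (\<Sum>j\<le>n - m. of_nat N * (A j (j + m) * parity_elem a (j + m) j))"
    using assms(1) by (intro sum.mono_neutral_cong_right) auto
  finally show ?thesis by (simp add: sum_distrib_left)
qed

definition diag_part :: "(nat \<Rightarrow> nat \<Rightarrow> complex) \<Rightarrow> nat \<Rightarrow> nat \<Rightarrow> complex" where
  "diag_part X j k = (if j = k then X j k else 0)"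

lemma diag_part_eq_iff: "diag_part A = A \<longleftrightarrow> (\<forall>j k. j \<noteq> k \<longrightarrow> A j k = 0)"
  by (auto simp: diag_part_def fun_eq_iff)

lemma parity_trace_diag_part:
  "parity_trace n (diag_part X) a = (\<Sum>j\<le>n. X j j * parity_elem a j j)"
  unfolding parity_trace_def diag_part_def
  by (simp add: if_distrib[of "\<lambda>y. y * _"] cong: if_cong)

definition radial_poly :: "nat \<Rightarrow> (nat \<Rightarrow> nat \<Rightarrow> complex) \<Rightarrow> real poly" where
  "radial_poly n A = (\<Sum>k\<le>n. smult (Re (A k k)) (parity_poly 0 k))"

lemma Re_parity_trace_diag_part:
  "Re (parity_trace n (diag_part X) a) =
     exp (- 2 * (cmod a)\<^sup>2) * poly (radial_poly n X) ((cmod a)\<^sup>2)"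
  using parity_elem_offdiag[of a _ 0]
  by (simp add: parity_trace_diag_part radial_poly_def poly_sum Re_sum sum_distrib_left mult_ac)

lemma wigner_diag_nonneg_iff:
  assumes "diag_part A = A"
  shows "(\<forall>a. 0 \<le> wigner n A a) \<longleftrightarrow> (\<forall>x\<ge>0. 0 \<le> poly (radial_poly n A) x)"
proof -
  have "0 \<le> wigner n A a \<longleftrightarrow> 0 \<le> poly (radial_poly n A) ((cmod a)\<^sup>2)" for a
    using Re_parity_trace_diag_part[of n A a] assms
    by (simp add: wigner_nonneg_iff zero_le_mult_iff)
  moreover have "(cmod (of_real (sqrt x)))\<^sup>2 = x" if "0 \<le> x" for x
    using that by simp
  ultimately show ?thesis by (metis zero_le_power2)
qed

lemma diag_part_in_Aoplus:
  assumes "X \<in> Aplus n"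
  shows "diag_part X \<in> Aoplus n"
proof -
  define N where "N = Suc (2 * n)"
  have "0 \<le> Re (parity_trace n (diag_part X) a)" for a
  proof -
    have avg: "(\<Sum>s<N. parity_trace n X (root_unity N s * a)) =
        of_nat N * parity_trace n (diag_part X) a"
      using sum_root_unity_parity_trace[of 0 n N X a] by (simp add: N_def parity_trace_diag_part)
    have "(\<Sum>s<N. Re (parity_trace n X (root_unity N s * a))) =
        real N * Re (parity_trace n (diag_part X) a)"
      using arg_cong[OF avg, of Re] by (simp add: Re_sum)
    moreover have "0 \<le> (\<Sum>s<N. Re (parity_trace n X (root_unity N s * a)))"
      using assms by (intro sum_nonneg) (simp add: Aplus_def flip: wigner_nonneg_iff)
    ultimately show ?thesis by (simp add: N_def zero_le_mult_iff)
  qed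
  moreover have "quasi_state_on n (diag_part X)"
  proof -
    have X: "supported_on n X" "\<forall>j k. X j k = cnj (X k j)" "(\<Sum>k\<le>n. X k k) = 1"
      using assms unfolding Aplus_def quasi_state_on_def by blast+
    have "cnj (X k j) = X j k" for j k
      using X(2) by metis
    then have "\<forall>j k. diag_part X j k = cnj (diag_part X k j)"
      by (simp add: diag_part_def)
    moreover have "supported_on n (diag_part X)"
      using X(1) by (simp add: supported_on_def diag_part_def)
    moreover have "(\<Sum>k\<le>n. diag_part X k k) = 1"
      using X(3) by (simp add: diag_part_def)
    ultimately show ?thesis unfolding quasi_state_on_def by blast
  qed
  ultimately show ?thesis
    by (simp add: Aoplus_def Aplus_def diag_part_def wigner_nonneg_iff)
qed

lemma Aoplus_pred:
  assumes "A \<in> Aoplus (Suc n)" and "A (Suc n) (Suc n) = 0"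
  shows "A \<in> Aoplus n"
proof -
  have A: "supported_on (Suc n) A" "\<forall>j k. A j k = cnj (A k j)" "(\<Sum>k\<le>Suc n. A k k) = 1"
    "\<forall>a. 0 \<le> wigner (Suc n) A a" "\<forall>j k. j \<noteq> k \<longrightarrow> A j k = 0"
    using assms(1) unfolding Aoplus_def Aplus_def quasi_state_on_def by blast+
  have row: "A (Suc n) k = 0" and col: "A k (Suc n) = 0" for k
    using A(5) assms(2) by (cases "k = Suc n"; simp)+
  have "supported_on n A"
    unfolding supported_on_def
  proof (intro allI impI)
    fix j k assume "n < j \<or> n < k"
    then consider "j = Suc n" | "k = Suc n" | "Suc n < j \<or> Suc n < k" by linarith
    then show "A j k = 0" using row col A(1) unfolding supported_on_def by cases auto
  qed
  moreover have "(\<Sum>k\<le>n. A k k) = 1" using A(3) assms(2) by simp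
  moreover have "\<forall>a. 0 \<le> wigner n A a"
    using A(4) by (simp add: wigner_def row col)
  ultimately show ?thesis
    using A(2,5) unfolding Aoplus_def Aplus_def quasi_state_on_def by blast
qed

lemma radial_poly_nonneg:
  assumes "A \<in> Aoplus n" and "0 \<le> x"
  shows "0 \<le> poly (radial_poly n A) x"
proof -
  have "diag_part A = A" and "\<forall>a. 0 \<le> wigner n A a"
    using assms(1) unfolding Aoplus_def Aplus_def diag_part_eq_iff by blast+
  then show ?thesis using wigner_diag_nonneg_iff assms(2) by blast
qed

lemma degree_radial_poly:
  assumes "Re (A n n) \<noteq> 0"
  shows "degree (radial_poly n A) = n"
proof (rule antisym)
  show "degree (radial_poly n A) \<le> n"
    unfolding radial_poly_def by (rule degree_sum_smult_triangular_le[OF degree_parity_poly])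
  have "coeff (radial_poly n A) n = Re (A n n) * coeff (parity_poly 0 n) n"
    unfolding radial_poly_def by (rule coeff_sum_smult_triangular[OF degree_parity_poly])
  then show "n \<le> degree (radial_poly n A)"
    using assms coeff_parity_poly_self by (intro le_degree) simp
qed

lemma offdiag_parity_poly_bound:
  assumes herm: "\<And>j k. D j k = cnj (D k j)"
    and bound: "\<And>a. \<bar>Re (parity_trace n D a)\<bar> \<le> Re (parity_trace n A a)"
    and diag: "diag_part A = A" and "m \<le> n" and "0 \<le> r"
  shows "(2 * r) ^ m * cmod (\<Sum>j\<le>n - m. D j (j + m) * of_real (poly (parity_poly m j) (r\<^sup>2)))
     \<le> poly (radial_poly n A) (r\<^sup>2)"
proof -
  define N where "N = Suc (2 * n)"
  define E where "E = exp (- 2 * r\<^sup>2)"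
  define H where "H = (\<Sum>j\<le>n - m. D j (j + m) * of_real (poly (parity_poly m j) (r\<^sup>2)))"
  let ?\<rho> = "root_unity N" and ?a = "complex_of_real r"
  have "(\<Sum>s<N. cnj (?\<rho> s) ^ m * parity_trace n D (?\<rho> s * ?a)) =
      of_nat N * (\<Sum>j\<le>n - m. D j (j + m) * parity_elem ?a (j + m) j)"
    using assms(4) by (intro sum_root_unity_parity_trace) (auto simp: N_def)
  also have "\<dots> = of_nat N * ((2 * ?a) ^ m * of_real E * H)"
    unfolding parity_elem_offdiag H_def sum_distrib_left E_def using assms(5)
    by (simp add: mult_ac)
  finally have avg: "\<dots> = (\<Sum>s<N. cnj (?\<rho> s) ^ m * parity_trace n D (?\<rho> s * ?a))" ..
  have "real N * (E * ((2 * r) ^ m * cmod H)) = cmod (of_nat N * ((2 * ?a) ^ m * of_real E * H))"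
    using assms(5) by (simp add: E_def norm_mult norm_power mult_ac)
  also have "\<dots> \<le> (\<Sum>s<N. cmod (parity_trace n D (?\<rho> s * ?a)))"
    unfolding avg by (rule order_trans[OF norm_sum]) (simp add: norm_mult norm_power)
  also have "\<dots> = (\<Sum>s<N. \<bar>Re (parity_trace n D (?\<rho> s * ?a))\<bar>)"
  proof (intro sum.cong refl)
    fix s
    have "parity_trace n D (?\<rho> s * ?a) \<in> \<real>"
      using cnj_parity_trace[of D, OF herm] by (simp add: Reals_cnj_iff)
    then show "cmod (parity_trace n D (?\<rho> s * ?a)) = \<bar>Re (parity_trace n D (?\<rho> s * ?a))\<bar>"
      by (auto elim: Reals_cases)
  qed
  also have "\<dots> \<le> (\<Sum>s<N. Re (parity_trace n A (?\<rho> s * ?a)))"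
    by (intro sum_mono bound)
  also have "\<dots> = real N * (E * poly (radial_poly n A) (r\<^sup>2))"
    using Re_parity_trace_diag_part[of n A] diag assms(5) by (simp add: E_def norm_mult)
  finally have "E * ((2 * r) ^ m * cmod H) \<le> E * poly (radial_poly n A) (r\<^sup>2)"
    by (rule mult_left_le_imp_le) (simp add: N_def)
  then show ?thesis unfolding H_def by (rule mult_left_le_imp_le) (simp add: E_def)
qed

section \<open>Perturbing extreme phase-invariant quasi-states\<close>

definition real_diag :: "nat \<Rightarrow> (nat \<Rightarrow> real) \<Rightarrow> nat \<Rightarrow> nat \<Rightarrow> complex" where
  "real_diag n \<beta> j k = (if j = k \<and> j \<le> n then of_real (\<beta> j) else 0)"

lemma add_real_diag_in_Aoplus:
  assumes A: "A \<in> Aoplus n" and trace: "(\<Sum>k\<le>n. \<beta> k) = 0"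
    and nonneg: "\<And>x. 0 \<le> x \<Longrightarrow>
      0 \<le> poly (radial_poly n A + (\<Sum>k\<le>n. smult (\<beta> k) (parity_poly 0 k))) x"
  shows "(\<lambda>j k. A j k + real_diag n \<beta> j k) \<in> Aoplus n"
    (is "?A' \<in> _")
proof -
  have A': "supported_on n A" "\<forall>j k. A j k = cnj (A k j)" "(\<Sum>k\<le>n. A k k) = 1"
    "\<forall>j k. j \<noteq> k \<longrightarrow> A j k = 0"
    using A unfolding Aoplus_def Aplus_def quasi_state_on_def by blast+
  have herm: "cnj (A k j) = A j k" for j k
    using A'(2) by metis
  have diag: "diag_part ?A' = ?A'"
    using A'(4) by (simp add: diag_part_eq_iff real_diag_def)
  have "radial_poly n ?A' = radial_poly n A + (\<Sum>k\<le>n. smult (\<beta> k) (parity_poly 0 k))"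
    by (simp add: radial_poly_def real_diag_def sum.distrib smult_add_left)
  then have "\<forall>a. 0 \<le> wigner n ?A' a"
    using wigner_diag_nonneg_iff[OF diag] nonneg by simp
  moreover have "(\<Sum>k\<le>n. ?A' k k) = 1"
    using A'(3) trace by (simp add: real_diag_def sum.distrib flip: of_real_sum)
  moreover have "supported_on n ?A'"
    using A'(1) by (simp add: supported_on_def real_diag_def)
  moreover have "\<forall>j k. ?A' j k = cnj (?A' k j)"
    by (simp add: herm real_diag_def)
  ultimately show ?thesis
    using diag unfolding Aoplus_def Aplus_def quasi_state_on_def diag_part_eq_iff by blast
qed

text \<open>
  Otherwise \<open>A\<close> could be perturbed diagonally so that its radial polynomial \<open>p\<close> moves by
  \<open>\<plusminus>\<epsilon> (e - \<tau> p)\<close>, with \<open>\<tau>\<close> fixing the trace; domination of \<open>e\<close> by \<open>p\<close> keeps both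
  perturbations Wigner-positive for small \<open>\<epsilon>\<close>.
\<close>

lemma extr_Aoplus_dominated_poly_multiple:
  assumes ext: "A \<in> extr (Aoplus n)" and "degree e \<le> n"
    and bound: "\<And>x. 0 \<le> x \<Longrightarrow> \<bar>poly e x\<bar> \<le> K * poly (radial_poly n A) x"
  shows "\<exists>\<tau>. e = smult \<tau> (radial_poly n A)"
proof -
  have A: "A \<in> Aoplus n" using ext by (simp add: extr_def)
  define p where "p = radial_poly n A"
  obtain b where e: "e = (\<Sum>k\<le>n. smult (b k) (parity_poly 0 k))"
    using ex_sum_smult_triangular_eq[OF degree_parity_poly[of 0] coeff_parity_poly_self[of 0]]
      \<open>degree e \<le> n\<close> by blast
  define \<tau> where "\<tau> = (\<Sum>k\<le>n. b k)"
  define \<beta> where "\<beta> k = b k - \<tau> * Re (A k k)" for k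
  define \<epsilon> where "\<epsilon> = 1 / (1 + \<bar>K\<bar> + \<bar>\<tau>\<bar>)"
  have \<epsilon>: "0 < \<epsilon>" "\<epsilon> * (\<bar>K\<bar> + \<bar>\<tau>\<bar>) \<le> 1" by (simp_all add: \<epsilon>_def field_simps)
  have "(\<Sum>k\<le>n. A k k) = 1" using A unfolding Aoplus_def Aplus_def quasi_state_on_def by blast
  then have "(\<Sum>k\<le>n. Re (A k k)) = 1" by (metis Re_sum one_complex.sel(1))
  then have trace: "(\<Sum>k\<le>n. \<beta> k) = 0"
    by (simp add: \<beta>_def \<tau>_def sum_subtractf flip: sum_distrib_left)
  have q: "(\<Sum>k\<le>n. smult (\<beta> k) (parity_poly 0 k)) = e - smult \<tau> p"
    by (simp add: \<beta>_def e p_def radial_poly_def smult_diff_left sum_subtractf smult_sum_right)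
  have in_Aoplus: "(\<lambda>j k. A j k + real_diag n (\<lambda>k. t * \<beta> k) j k) \<in> Aoplus n"
    if "\<bar>t\<bar> = \<epsilon>" for t
  proof (rule add_real_diag_in_Aoplus[OF A])
    show "(\<Sum>k\<le>n. t * \<beta> k) = 0" using trace by (simp flip: sum_distrib_left)
    fix x :: real assume "0 \<le> x"
    have p_nonneg: "0 \<le> poly p x" using radial_poly_nonneg[OF A \<open>0 \<le> x\<close>] by (simp add: p_def)
    have "\<bar>t * (poly e x - \<tau> * poly p x)\<bar> \<le> \<epsilon> * (\<bar>K\<bar> * poly p x + \<bar>\<tau>\<bar> * poly p x)"
      unfolding abs_mult \<open>\<bar>t\<bar> = \<epsilon>\<close> using \<epsilon>(1) bound[OF \<open>0 \<le> x\<close>] p_nonneg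
      by (intro mult_left_mono order_trans[OF abs_triangle_ineq4] add_mono)
        (auto simp: abs_mult p_def intro: order_trans[OF _ mult_right_mono[of K "\<bar>K\<bar>"]])
    also have "\<dots> \<le> poly p x"
      using mult_right_mono[OF \<epsilon>(2) p_nonneg] by (simp add: algebra_simps)
    finally have "0 \<le> poly p x + t * (poly e x - \<tau> * poly p x)" by linarith
    moreover have "(\<Sum>k\<le>n. smult (t * \<beta> k) (parity_poly 0 k)) = smult t (e - smult \<tau> p)"
      unfolding q[symmetric] smult_sum_right by simp
    ultimately show "0 \<le> poly (radial_poly n A + (\<Sum>k\<le>n. smult (t * \<beta> k) (parity_poly 0 k))) x"
      by (simp add: p_def)
  qed
  have "A = (\<lambda>j k. ((A j k + real_diag n (\<lambda>k. \<epsilon> * \<beta> k) j k) +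
      (A j k + real_diag n (\<lambda>k. - \<epsilon> * \<beta> k) j k)) / 2)"
    by (simp add: fun_eq_iff real_diag_def)
  then have fixed: "(\<lambda>j k. A j k + real_diag n (\<lambda>k. \<epsilon> * \<beta> k) j k) = A"
    using ext in_Aoplus[of \<epsilon>] in_Aoplus[of "- \<epsilon>"] \<epsilon>(1) unfolding extr_def by auto
  have "\<beta> k = 0" if "k \<le> n" for k
    using fun_cong[OF fun_cong[OF fixed, of k], of k] \<epsilon>(1) that by (simp add: real_diag_def)
  then have "e - smult \<tau> p = 0" by (simp flip: q)
  then show ?thesis by (auto simp: p_def)
qed

lemma hermitian_nonzero_offdiagE:
  assumes herm: "\<And>j k. D j k = cnj (D k j)" and "supported_on n D" and "\<And>j. D j j = 0"
    and "D j k \<noteq> 0"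
  obtains i m where "1 \<le> m" and "i + m \<le> n" and "D i (i + m) \<noteq> 0"
proof -
  have "j \<noteq> k" and "j \<le> n" and "k \<le> n"
    using assms(2-4) unfolding supported_on_def by (metis not_le)+
  then consider "j < k" | "k < j" by linarith
  then show ?thesis
  proof cases
    case 1
    then show ?thesis using that[of "k - j" j] assms(4) \<open>k \<le> n\<close> by simp
  next
    case 2
    have "D k j \<noteq> 0" using assms(4) herm[of j k] by auto
    then show ?thesis using 2 that[of "j - k" k] \<open>j \<le> n\<close> by simp
  qed
qed

lemma dominated_by_extr_Aoplus_eq_0:
  assumes ext: "A \<in> extr (Aoplus n)" and "A n n \<noteq> 0"
    and herm: "\<And>j k. D j k = cnj (D k j)" and "supported_on n D" and "\<And>j. D j j = 0"
    and bound: "\<And>a. \<bar>Re (parity_trace n D a)\<bar> \<le> Re (parity_trace n A a)"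
  shows "D j k = 0"
proof (rule ccontr)
  assume "D j k \<noteq> 0"
  then obtain i m where m: "1 \<le> m" "i + m \<le> n" and z: "D i (i + m) \<noteq> 0"
    using hermitian_nonzero_offdiagE[OF herm assms(4,5)] by blast
  have A: "A \<in> Aoplus n" using ext by (simp add: extr_def)
  then have diag: "diag_part A = A" and Ann_real: "A n n = cnj (A n n)"
    unfolding Aoplus_def Aplus_def quasi_state_on_def diag_part_eq_iff by blast+
  from Ann_real have "A n n \<in> \<real>" unfolding Reals_cnj_iff by (rule sym)
  then have "Re (A n n) \<noteq> 0" using \<open>A n n \<noteq> 0\<close> by (auto elim: Reals_cases)
  then have deg_p: "degree (radial_poly n A) = n" by (rule degree_radial_poly)
  define c where "c = cnj (sgn (D i (i + m)))"
  define u where "u = (\<Sum>j\<le>n - m. smult (Re (c * D j (j + m))) (parity_poly m j))"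
  have "(2 * r) ^ m * \<bar>poly u (r\<^sup>2)\<bar> \<le> poly (radial_poly n A) (r\<^sup>2)" if "0 \<le> r" for r
  proof -
    let ?H = "\<Sum>j\<le>n - m. D j (j + m) * of_real (poly (parity_poly m j) (r\<^sup>2))"
    have "poly u (r\<^sup>2) = Re (c * ?H)"
      unfolding u_def poly_sum poly_smult sum_distrib_left Re_sum
      by (intro sum.cong refl) (simp add: algebra_simps)
    also have "\<bar>\<dots>\<bar> \<le> cmod (c * ?H)" by (rule abs_Re_le_cmod)
    also have "\<dots> = cmod ?H" using z by (simp add: c_def norm_mult norm_sgn)
    finally have "(2 * r) ^ m * \<bar>poly u (r\<^sup>2)\<bar> \<le> (2 * r) ^ m * cmod ?H"
      using that by (simp add: mult_left_mono)
    also have "\<dots> \<le> poly (radial_poly n A) (r\<^sup>2)"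
      using m by (intro offdiag_parity_poly_bound[OF herm bound diag] that) simp
    finally show ?thesis .
  qed
  moreover have "u \<noteq> 0"
  proof
    assume "u = 0"
    then have "Re (c * D i (i + m)) = 0"
      using sum_smult_triangular_eq_0D[OF degree_parity_poly[of m] coeff_parity_poly_self[of m]] m
      unfolding u_def by fastforce
    moreover have "c * D i (i + m) = of_real (cmod (D i (i + m)))"
    proof -
      let ?z = "D i (i + m)"
      have "c * ?z = ?z * cnj ?z / of_real (cmod ?z)" by (simp add: c_def sgn_eq)
      also have "\<dots> = of_real ((cmod ?z)\<^sup>2) / of_real (cmod ?z)" by (simp only: complex_norm_square)
      also have "\<dots> = of_real (cmod ?z)" using z by (simp add: power2_eq_square)
      finally show ?thesis .
    qed
    ultimately show False using z by simp
  qed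
  moreover have "degree u \<le> n - m"
    unfolding u_def by (rule degree_sum_smult_triangular_le[OF degree_parity_poly])
  ultimately obtain e K where "degree e \<le> n" and "\<forall>\<tau>. e \<noteq> smult \<tau> (radial_poly n A)"
      and "\<forall>x\<ge>0. \<bar>poly e x\<bar> \<le> K * poly (radial_poly n A) x"
    using ex_poly_dominated_not_multiple[of m "radial_poly n A" u] m deg_p by auto
  then show False using extr_Aoplus_dominated_poly_multiple[OF ext] by blast
qed

lemma extr_Aoplus_midpoint_diag_part:
  assumes ext: "A \<in> extr (Aoplus n)" and "X \<in> Aplus n" and "Y \<in> Aplus n"
    and mid: "A = (\<lambda>j k. (X j k + Y j k) / 2)"
  shows "diag_part X = A"
proof -
  have "\<forall>j k. j \<noteq> k \<longrightarrow> A j k = 0"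
    using ext unfolding extr_def Aoplus_def by blast
  then have "A = (\<lambda>j k. (diag_part X j k + diag_part Y j k) / 2)"
    using mid by (auto simp: fun_eq_iff diag_part_def)
  then show ?thesis
    using ext diag_part_in_Aoplus[OF assms(2)] diag_part_in_Aoplus[OF assms(3)]
    unfolding extr_def by blast
qed

lemma extr_Aoplus_midpoint_eq:
  assumes ext: "A \<in> extr (Aoplus n)" and "A n n \<noteq> 0" and X: "X \<in> Aplus n" and Y: "Y \<in> Aplus n"
    and mid: "A = (\<lambda>j k. (X j k + Y j k) / 2)"
  shows "X = A"
proof -
  define D where "D j k = X j k - A j k" for j k
  have diag: "diag_part X = A" by (rule extr_Aoplus_midpoint_diag_part[OF ext X Y mid])
  have "D j j = 0" for j
    using fun_cong[OF fun_cong[OF diag, of j], of j] by (simp add: D_def diag_part_def)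
  have X': "supported_on n X" "\<forall>j k. X j k = cnj (X k j)"
    using X unfolding Aplus_def quasi_state_on_def by blast+
  have A': "supported_on n A" "\<forall>j k. A j k = cnj (A k j)"
    using ext unfolding extr_def Aoplus_def Aplus_def quasi_state_on_def by blast+
  have "supported_on n D"
    using X'(1) A'(1) unfolding supported_on_def D_def by simp
  moreover have "D j k = cnj (D k j)" for j k
    unfolding D_def complex_cnj_diff using X'(2) A'(2) by metis
  moreover have "\<bar>Re (parity_trace n D a)\<bar> \<le> Re (parity_trace n A a)" for a
  proof -
    have "Y = (\<lambda>j k. 2 * A j k - X j k)" using mid by (simp add: fun_eq_iff field_simps)
    then have "parity_trace n Y a = 2 * parity_trace n A a - parity_trace n X a"
      by (simp add: parity_trace_def sum_subtractf sum_distrib_left left_diff_distrib mult.assoc)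
    moreover have "0 \<le> Re (parity_trace n Y a)" and "0 \<le> Re (parity_trace n X a)"
      using X Y by (simp_all add: Aplus_def flip: wigner_nonneg_iff)
    ultimately show ?thesis unfolding D_def parity_trace_diff by simp
  qed
  ultimately have "D j k = 0" for j k
    using dominated_by_extr_Aoplus_eq_0[OF ext \<open>A n n \<noteq> 0\<close>, of D] \<open>\<And>j. D j j = 0\<close> by blast
  then show ?thesis by (simp add: D_def fun_eq_iff)
qed

theorem lemma3:
  fixes n :: nat
  assumes "1 \<le> n"
  shows "extr (Aoplus n) - Aoplus (n - 1) \<subseteq> extr (Aplus n)"
proof
  fix A assume "A \<in> extr (Aoplus n) - Aoplus (n - 1)"
  then have ext: "A \<in> extr (Aoplus n)" and "A \<notin> Aoplus (n - 1)" by auto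
  then have "A n n \<noteq> 0"
    using Aoplus_pred[of A "n - 1"] assms by (auto simp: extr_def)
  have "X = A \<and> Y = A"
    if "X \<in> Aplus n" "Y \<in> Aplus n" "A = (\<lambda>j k. (X j k + Y j k) / 2)" for X Y
  proof
    show "X = A" by (rule extr_Aoplus_midpoint_eq[OF ext \<open>A n n \<noteq> 0\<close> that])
    have "A = (\<lambda>j k. (Y j k + X j k) / 2)" using that(3) by (simp add: add.commute)
    then show "Y = A" by (rule extr_Aoplus_midpoint_eq[OF ext \<open>A n n \<noteq> 0\<close> that(2,1)])
  qed
  moreover have "A \<in> Aplus n" using ext by (simp add: extr_def Aoplus_def)
  ultimately show "A \<in> extr (Aplus n)" unfolding extr_def by blast
qed

end
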